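(* Let $\epsilon>0$ and $c>1/4+\epsilon$. Then for every $n$, $\mathrm{ORS}_n(cn)\le 1/\epsilon+1$.
   Context: For a matching $M$, $V(M)$ denotes the set of vertices matched by $M$. A sequence $M_1,\dots,M_t$ of pairwise edge-disjoint matchings is called ordered-induced if for every $i\in[t]$, $M_i$ is an induced matching of the graph with edge set $M_1\cup\dots\cup M_i$, i.e., no edge of $M_1\cup\cdots\cup M_{i-1}$ has both endpoints in $V(M_i)$. An $n$-vertex graph is an $\mathrm{ORS}_n(r,t)$ graph if its edge set is the union of an ordered-induced sequence of $t$ matchings, each of size exactly $r$. $\mathrm{ORS}_n(r)$ denotes the maximum $t$ for which an $\mathrm{ORS}_n(r,t)$ graph exists (for non-integer $r$, $r$ is replaced by $\lceil r\rceil$). *)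

theory Defs
  imports Main Complex_Main
begin

definition is_matching :: "nat \<Rightarrow> nat set set \<Rightarrow> bool" where
  "is_matching n M \<longleftrightarrow>
     (\<forall>e\<in>M. e \<subseteq> {..<n} \<and> card e = 2) \<and>
     (\<forall>e\<in>M. \<forall>f\<in>M. e \<noteq> f \<longrightarrow> e \<inter> f = {})"

definition matched_vertices :: "nat set set \<Rightarrow> nat set" where
  "matched_vertices M = \<Union>M"

definition ordered_induced :: "(nat \<Rightarrow> nat set set) \<Rightarrow> nat \<Rightarrow> bool" where
  "ordered_induced Ms t \<longleftrightarrow>
     (\<forall>i<t. \<forall>j<t. i \<noteq> j \<longrightarrow> Ms i \<inter> Ms j = {}) \<and>
     (\<forall>i<t. \<forall>j<i. \<forall>e\<in>Ms j. \<not> e \<subseteq> matched_vertices (Ms i))"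

text \<open>An ORS_n(r,t) graph exists: edge set is the union of an ordered-induced
  sequence of t matchings of size exactly r on n vertices.\<close>
definition ORS_graph_exists :: "nat \<Rightarrow> nat \<Rightarrow> nat \<Rightarrow> bool" where
  "ORS_graph_exists n r t \<longleftrightarrow>
     (\<exists>Ms. (\<forall>i<t. is_matching n (Ms i) \<and> card (Ms i) = r) \<and> ordered_induced Ms t)"

definition ORS :: "nat \<Rightarrow> real \<Rightarrow> nat" where
  "ORS n r = Sup {t. ORS_graph_exists n (nat \<lceil>r\<rceil>) t}"

end

theory Submission
  imports Defs "HOL-Analysis.Convex"
begin

text \<open>Let \<open>V\<^sub>i = V(M\<^sub>i)\<close>. Each edge of an earlier matching \<open>M\<^sub>j\<close> has at most one endpoint
  in a later \<open>V\<^sub>i\<close>, so \<open>|V\<^sub>i \<inter> V\<^sub>j| \<le> r\<close> for \<open>i \<noteq> j\<close>, while \<open>|V\<^sub>i| = 2r\<close>. Writing \<open>d(v)\<close>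
  for the number of \<open>V\<^sub>i\<close> containing \<open>v\<close>, double counting gives \<open>\<Sum> d(v) = 2rt\<close> and
  \<open>\<Sum> d(v)\<^sup>2 = \<Sum>\<^sub>i\<^sub>,\<^sub>j |V\<^sub>i \<inter> V\<^sub>j| \<le> rt(t+1)\<close>, and Cauchy-Schwarz over the \<open>n\<close> vertices yields
  \<open>4rt \<le> n(t+1)\<close>. For \<open>r \<ge> (1/4 + \<epsilon>)n\<close> this forces \<open>t \<le> 1/(4\<epsilon>)\<close>.\<close>

lemma is_matching_finite:
  assumes "is_matching n M"
  shows "finite M"
proof (rule finite_subset)
  show "M \<subseteq> Pow {..<n}" using assms unfolding is_matching_def by auto
qed simp

lemma card_matched_vertices:
  assumes "is_matching n M"
  shows "card (matched_vertices M) = 2 * card M"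
proof -
  have edges: "\<forall>e\<in>M. finite e \<and> card e = 2"
    using assms unfolding is_matching_def by (auto intro: card_ge_0_finite)
  have "pairwise disjnt M"
    using assms unfolding is_matching_def pairwise_def disjnt_def by auto
  then have "card (\<Union>M) = sum card M"
    using is_matching_finite[OF assms] edges by (intro card_Union_disjoint) auto
  also have "\<dots> = 2 * card M"
    using edges by simp
  finally show ?thesis unfolding matched_vertices_def .
qed

lemma card_matched_vertices_Int_le:
  assumes "is_matching n M" and "\<forall>e\<in>M. \<not> e \<subseteq> W"
  shows "card (matched_vertices M \<inter> W) \<le> card M"
proof -
  have "matched_vertices M \<inter> W = (\<Union>e\<in>M. e \<inter> W)"
    unfolding matched_vertices_def by blast
  then have "card (matched_vertices M \<inter> W) \<le> (\<Sum>e\<in>M. card (e \<inter> W))"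
    using card_UN_le[OF is_matching_finite[OF assms(1)]] by (simp only:)
  also have "\<dots> \<le> (\<Sum>e\<in>M. 1)"
  proof (rule sum_mono)
    fix e assume e: "e \<in> M"
    then have "card e = 2"
      using assms(1) unfolding is_matching_def by blast
    moreover have "e \<inter> W \<subset> e"
      using assms(2) e by blast
    ultimately have "card (e \<inter> W) < card e"
      by (intro psubset_card_mono) (auto intro: card_ge_0_finite)
    with \<open>card e = 2\<close> show "card (e \<inter> W) \<le> 1" by simp
  qed
  finally show ?thesis by simp
qed

lemma ordered_induced_card_Int_le:
  assumes "ordered_induced Ms t" and "is_matching n (Ms j)" and "j < i" and "i < t"
  shows "card (matched_vertices (Ms j) \<inter> matched_vertices (Ms i)) \<le> card (Ms j)"
proof (rule card_matched_vertices_Int_le[OF assms(2)])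
  show "\<forall>e\<in>Ms j. \<not> e \<subseteq> matched_vertices (Ms i)"
    using assms(1,3,4) unfolding ordered_induced_def by blast
qed

lemma square_sum_card_le:
  fixes V :: "'i \<Rightarrow> 'a set"
  assumes "finite I" and "finite U" and "\<And>i. i \<in> I \<Longrightarrow> V i \<subseteq> U"
  shows "(\<Sum>i\<in>I. card (V i))\<^sup>2 \<le> card U * (\<Sum>i\<in>I. \<Sum>j\<in>I. card (V i \<inter> V j))"
proof -
  define d where "d v = (\<Sum>i\<in>I. of_bool (v \<in> V i) :: real)" for v
  have "(\<Sum>v\<in>U. d v) = (\<Sum>i\<in>I. real (card (U \<inter> V i)))"
    unfolding d_def using assms(2) by (subst sum.swap) simp
  also have "\<dots> = real (\<Sum>i\<in>I. card (V i))"
    using assms(3) by (simp add: Int_absorb1)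
  finally have sum_d: "(\<Sum>v\<in>U. d v) = real (\<Sum>i\<in>I. card (V i))" .
  have "(\<Sum>v\<in>U. (d v)\<^sup>2) = (\<Sum>v\<in>U. \<Sum>i\<in>I. \<Sum>j\<in>I. of_bool (v \<in> V i \<and> v \<in> V j))"
    unfolding d_def power2_eq_square sum_product by (simp add: of_bool_conj)
  also have "\<dots> = (\<Sum>i\<in>I. \<Sum>j\<in>I. \<Sum>v\<in>U. of_bool (v \<in> V i \<and> v \<in> V j))"
    by (subst sum.swap) (simp only: sum.swap[of _ U])
  also have "\<dots> = (\<Sum>i\<in>I. \<Sum>j\<in>I. real (card (V i \<inter> V j)))"
  proof (intro sum.cong refl)
    fix i j assume "i \<in> I" "j \<in> I"
    then have "U \<inter> {v. v \<in> V i \<and> v \<in> V j} = V i \<inter> V j"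
      using assms(3) by blast
    then show "(\<Sum>v\<in>U. of_bool (v \<in> V i \<and> v \<in> V j)) = real (card (V i \<inter> V j))"
      using assms(2) by simp
  qed
  finally have sum_d2: "(\<Sum>v\<in>U. (d v)\<^sup>2) = real (\<Sum>i\<in>I. \<Sum>j\<in>I. card (V i \<inter> V j))"
    by simp
  have "(\<Sum>v\<in>U. d v * 1)\<^sup>2 \<le> (\<Sum>v\<in>U. (d v)\<^sup>2) * (\<Sum>v\<in>U. 1\<^sup>2)"
    by (rule Cauchy_Schwarz_ineq_sum)
  then have "(real (\<Sum>i\<in>I. card (V i)))\<^sup>2 \<le> real (card U) * real (\<Sum>i\<in>I. \<Sum>j\<in>I. card (V i \<inter> V j))"
    by (simp add: sum_d sum_d2 mult.commute)
  then show ?thesis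
    by (simp only: of_nat_power[symmetric] of_nat_mult[symmetric] of_nat_le_iff)
qed

lemma mult_bound_of_square_bound:
  fixes n r t :: nat
  assumes "(2 * r * t)\<^sup>2 \<le> n * (r * t * (t + 1))"
  shows "4 * r * t \<le> n * (t + 1)"
proof (cases "r * t = 0")
  case False
  have "(2 * r * t)\<^sup>2 = (r * t) * (4 * r * t)" and "n * (r * t * (t + 1)) = (r * t) * (n * (t + 1))"
    by algebra+
  with assms have "(r * t) * (4 * r * t) \<le> (r * t) * (n * (t + 1))"
    by simp
  with False show ?thesis
    by simp
qed auto

lemma ORS_graph_exists_bound:
  assumes "ORS_graph_exists n r t"
  shows "4 * r * t \<le> n * (t + 1)"
proof -
  obtain Ms where Ms: "\<And>i. i < t \<Longrightarrow> is_matching n (Ms i) \<and> card (Ms i) = r"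
    and oi: "ordered_induced Ms t"
    using assms unfolding ORS_graph_exists_def by blast
  define V where "V i = matched_vertices (Ms i)" for i
  have V_sub: "V i \<subseteq> {..<n}" if "i < t" for i
    using Ms[OF that] unfolding V_def matched_vertices_def is_matching_def by auto
  have card_V: "card (V i) = 2 * r" if "i < t" for i
    using Ms[OF that] card_matched_vertices[of n "Ms i"] unfolding V_def by simp
  have card_V_Int: "card (V i \<inter> V j) \<le> r + (if i = j then r else 0)" if "i < t" "j < t" for i j
  proof (cases i j rule: linorder_cases)
    case less
    have "card (matched_vertices (Ms i) \<inter> matched_vertices (Ms j)) \<le> card (Ms i)"
      using Ms[OF that(1)] less that(2) by (intro ordered_induced_card_Int_le[OF oi]) auto
    with less show ?thesis
      using Ms[OF that(1)] unfolding V_def by simp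
  next
    case equal
    then show ?thesis
      using card_V[OF that(1)] by simp
  next
    case greater
    have "card (matched_vertices (Ms j) \<inter> matched_vertices (Ms i)) \<le> card (Ms j)"
      using Ms[OF that(2)] greater that(1) by (intro ordered_induced_card_Int_le[OF oi]) auto
    with greater show ?thesis
      using Ms[OF that(2)] unfolding V_def by (simp add: Int_commute)
  qed
  have row_sum: "(\<Sum>j<t. r + (if i = j then r else 0)) = r * t + r" if "i < t" for i
    using that by (simp add: sum.distrib)
  have "(2 * r * t)\<^sup>2 = (\<Sum>i<t. card (V i))\<^sup>2"
    using card_V by simp
  also have "\<dots> \<le> n * (\<Sum>i<t. \<Sum>j<t. card (V i \<inter> V j))"
    using square_sum_card_le[of "{..<t}" "{..<n}" V] V_sub by simp
  also have "\<dots> \<le> n * (\<Sum>i<t. \<Sum>j<t. r + (if i = j then r else 0))"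
    by (intro mult_left_mono sum_mono card_V_Int) simp_all
  also have "\<dots> = n * (r * t * (t + 1))"
    using row_sum by (simp add: algebra_simps)
  finally show ?thesis
    by (rule mult_bound_of_square_bound)
qed

lemma ORS_le:
  assumes "\<And>t. ORS_graph_exists n (nat \<lceil>r\<rceil>) t \<Longrightarrow> real t \<le> x"
  shows "real (ORS n r) \<le> x"
proof -
  have empty: "ORS_graph_exists n (nat \<lceil>r\<rceil>) 0"
    by (simp add: ORS_graph_exists_def ordered_induced_def)
  have "ORS n r \<le> nat \<lfloor>x\<rfloor>"
    unfolding ORS_def
  proof (rule cSup_least)
    fix t assume "t \<in> {t. ORS_graph_exists n (nat \<lceil>r\<rceil>) t}"
    then show "t \<le> nat \<lfloor>x\<rfloor>"
      using assms by (simp add: le_nat_floor)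
  qed (use empty in blast)
  moreover have "x \<ge> 0"
    using assms[OF empty] by simp
  ultimately show ?thesis
    by (metis of_nat_floor of_nat_le_iff order_trans)
qed

theorem theorem5p4:
  fixes \<epsilon> c :: real and n :: nat
  assumes "\<epsilon> > 0" and "c > 1/4 + \<epsilon>" and "n \<ge> 1"
  shows "real (ORS n (c * real n)) \<le> 1/\<epsilon> + 1"
proof (rule ORS_le)
  define r where "r = nat \<lceil>c * real n\<rceil>"
  have "(1/4 + \<epsilon>) * real n \<le> c * real n"
    using assms by (intro mult_right_mono) auto
  then have r_large: "(1 + 4 * \<epsilon>) * real n \<le> 4 * real r"
    using real_nat_ceiling_ge[of "c * real n"] unfolding r_def by (simp add: algebra_simps)
  fix t
  assume "ORS_graph_exists n r t"
  then have "real (4 * r * t) \<le> real (n * (t + 1))"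
    by (intro of_nat_mono ORS_graph_exists_bound)
  then have "4 * real r * real t \<le> real n * (real t + 1)"
    by (simp add: algebra_simps)
  with r_large have "(1 + 4 * \<epsilon>) * real n * real t \<le> real n * (real t + 1)"
    by (meson mult_right_mono of_nat_0_le_iff order_trans)
  then have "4 * \<epsilon> * real t \<le> 1"
    using assms(3) by (simp add: algebra_simps)
  then show "real t \<le> 1/\<epsilon> + 1"
    using assms(1) by (simp add: field_simps)
qed

end
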